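(* Let $M$ be a perfect matching for a self-contained finite bipartite graph $\mathcal{B}=\langle V,F,E\rangle$. Let $S_V^{(1)},\dots,S_V^{(n)}$ be a topological ordering of the strongly connected components of the directed graph $\mathcal{G}(\mathcal{B},M)_{\mathrm{mar}(F)}$, and for $i=1,\dots,n$ let $\mathcal{B}^{(i)}$ be the subgraph of $\mathcal{B}$ induced by $\bigcup_{j=i}^{n}(S_V^{(j)}\cup M(S_V^{(j)}))$. Then $\mathcal{B}^{(i)}$ is self-contained and $M(S_V^{(i)})$ is a minimal self-contained set in $\mathcal{B}^{(i)}$.
   Context: $\mathrm{adj}_{\mathcal{B}}(X)$ is the set of vertices adjacent to some vertex of $X$. A set $F'\subseteq F$ is self-contained in $\mathcal{B}$ if $|F'|=|\mathrm{adj}_{\mathcal{B}}(F')|$ and $|F''|\le|\mathrm{adj}_{\mathcal{B}}(F'')|$ for all $F''\subseteq F'$; a bipartite graph is self-contained if both its sides have equal size and its constraint side is self-contained; a non-empty self-contained set is minimal self-contained if no non-empty strict subset is self-contained. For a matching $M$ and vertex set $X$, $M(X)$ is the set of vertices matched to vertices of $X$. $\mathcal{G}(\mathcal{B},M)$ is the directed graph on $V\cup F$ with, for each $(v-f)\in E$, the edge $f\to v$ if $(v-f)\in M$ and $v\to f$ otherwise. $\mathcal{G}(\mathcal{B},M)_{\mathrm{mar}(F)}$ is the graph on $V$ with $x\to y$ iff $\mathcal{G}(\mathcal{B},M)$ has a directed path from $x$ to $y$ whose intermediate vertices all lie in $F$. A topological ordering of the strongly connected components means an ordering such that every edge between two distinct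 components goes from an earlier to a later component. *)

theory Defs
  imports Main
begin

definition bipartite_graph :: "'v set \<Rightarrow> 'f set \<Rightarrow> ('v \<times> 'f) set \<Rightarrow> bool" where
  "bipartite_graph V F E \<longleftrightarrow> finite V \<and> finite F \<and> E \<subseteq> V \<times> F"

definition adj :: "('v \<times> 'f) set \<Rightarrow> 'f set \<Rightarrow> 'v set" where
  "adj E X = {v. \<exists>f\<in>X. (v, f) \<in> E}"

definition self_contained_set :: "'f set \<Rightarrow> ('v \<times> 'f) set \<Rightarrow> 'f set \<Rightarrow> bool" where
  "self_contained_set F E F' \<longleftrightarrow> F' \<subseteq> F \<and> card F' = card (adj E F') \<and>
     (\<forall>F''. F'' \<subseteq> F' \<longrightarrow> card F'' \<le> card (adj E F''))"

definition self_contained_graph :: "'v set \<Rightarrow> 'f set \<Rightarrow> ('v \<times> 'f) set \<Rightarrow> bool" where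
  "self_contained_graph V F E \<longleftrightarrow> card V = card F \<and> self_contained_set F E F"

definition minimal_self_contained :: "'f set \<Rightarrow> ('v \<times> 'f) set \<Rightarrow> 'f set \<Rightarrow> bool" where
  "minimal_self_contained F E F' \<longleftrightarrow> F' \<noteq> {} \<and> self_contained_set F E F' \<and>
     (\<forall>F''. F'' \<noteq> {} \<and> F'' \<subset> F' \<longrightarrow> \<not> self_contained_set F E F'')"

definition perfect_matching :: "'v set \<Rightarrow> 'f set \<Rightarrow> ('v \<times> 'f) set \<Rightarrow> ('v \<times> 'f) set \<Rightarrow> bool" where
  "perfect_matching V F E M \<longleftrightarrow> M \<subseteq> E \<and>
     (\<forall>v\<in>V. \<exists>!f. (v, f) \<in> M) \<and> (\<forall>f\<in>F. \<exists>!v. (v, f) \<in> M)"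

definition matched :: "('v \<times> 'f) set \<Rightarrow> 'v set \<Rightarrow> 'f set" where
  "matched M X = {f. \<exists>v\<in>X. (v, f) \<in> M}"

definition orient_graph :: "('v \<times> 'f) set \<Rightarrow> ('v \<times> 'f) set \<Rightarrow> ('v + 'f) rel" where
  "orient_graph E M =
     {(Inr f, Inl v) | v f. (v, f) \<in> E \<and> (v, f) \<in> M} \<union>
     {(Inl v, Inr f) | v f. (v, f) \<in> E \<and> (v, f) \<notin> M}"

definition mar_graph :: "('v \<times> 'f) set \<Rightarrow> ('v \<times> 'f) set \<Rightarrow> 'v rel" where
  "mar_graph E M = {(x, y). \<exists>fs. (\<forall>z\<in>set fs. z \<in> range Inr) \<and>
       successively (\<lambda>a b. (a, b) \<in> orient_graph E M) (Inl x # fs @ [Inl y])}"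

definition sccs :: "'v set \<Rightarrow> 'v rel \<Rightarrow> 'v set set" where
  "sccs V R = {C. \<exists>x\<in>V. C = {y\<in>V. (x, y) \<in> (R \<inter> V \<times> V)\<^sup>* \<and> (y, x) \<in> (R \<inter> V \<times> V)\<^sup>*}}"

(* S is a topological ordering (list, 0-indexed) of the SCCs *)
definition topological_scc_ordering :: "'v set \<Rightarrow> 'v rel \<Rightarrow> 'v set list \<Rightarrow> bool" where
  "topological_scc_ordering V R S \<longleftrightarrow> distinct S \<and> set S = sccs V R \<and>
     (\<forall>i<length S. \<forall>j<length S. \<forall>x y. x \<in> S ! i \<and> y \<in> S ! j \<and> (x, y) \<in> R \<and> i \<noteq> j
        \<longrightarrow> i < j)"

end

theory Submission
  imports Defs
begin

(* Because M is perfect, each constraint is the partner of exactly one variable, which gives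
   Hall's condition |X| <= |adj X| for free; the same holds in the subgraph induced by any W and
   M(W), so every B^(i) is self-contained. An edge x -> y of G(B,M)_mar(F) means that x is
   adjacent to the partner of y. If X is a self-contained subset of M(C), then adj X is exactly
   the set of partners of X, and this set is therefore closed under predecessors in
   G(B,M)_mar(F). When C is strongly connected, this forces X = M(C); when moreover C has no
   incoming edges, adj M(C) = C, so M(C) is self-contained. The topological ordering makes
   S^(i) such a source component of G(B^(i),M)_mar(F). *)

lemma mar_graph_iff:
  assumes "M \<subseteq> E"
  shows "(x, y) \<in> mar_graph E M \<longleftrightarrow> (\<exists>f. (x, f) \<in> E \<and> (x, f) \<notin> M \<and> (y, f) \<in> M)"
proof
  assume "(x, y) \<in> mar_graph E M"
  then obtain fs where Inr: "\<forall>z\<in>set fs. z \<in> range Inr"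
    and path: "successively (\<lambda>a b. (a, b) \<in> orient_graph E M) (Inl x # fs @ [Inl y])"
    unfolding mar_graph_def by blast
  have no_Inr_Inr: "(Inr f, Inr g) \<notin> orient_graph E M" for f g
    by (simp add: orient_graph_def)
  show "\<exists>f. (x, f) \<in> E \<and> (x, f) \<notin> M \<and> (y, f) \<in> M"
  proof (cases fs rule: remdups_adj.cases)
    case 1
    then show ?thesis using path by (simp add: orient_graph_def)
  next
    case (2 a)
    then show ?thesis using Inr path by (auto simp: orient_graph_def)
  next
    case (3 a b rest)
    then show ?thesis using Inr path no_Inr_Inr by auto
  qed
next
  assume "\<exists>f. (x, f) \<in> E \<and> (x, f) \<notin> M \<and> (y, f) \<in> M"
  then obtain f where "(x, f) \<in> E" "(x, f) \<notin> M" "(y, f) \<in> M" by blast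
  then have "successively (\<lambda>a b. (a, b) \<in> orient_graph E M) [Inl x, Inr f, Inl y]"
    using assms by (auto simp: orient_graph_def)
  then show "(x, y) \<in> mar_graph E M"
    unfolding mar_graph_def by (auto intro!: exI[of _ "[Inr f]"])
qed

lemma mar_graph_induced:
  assumes "M \<subseteq> E"
  shows "mar_graph (E \<inter> W \<times> matched M W) (M \<inter> W \<times> matched M W) = mar_graph E M \<inter> W \<times> W"
proof -
  have "M \<inter> W \<times> matched M W \<subseteq> E \<inter> W \<times> matched M W"
    using assms by blast
  then show ?thesis
    using assms by (auto simp: mar_graph_iff matched_def) blast
qed

lemma matched_induced: "X \<subseteq> W \<Longrightarrow> matched (M \<inter> W \<times> matched M W) X = matched M X"
  unfolding matched_def by blast

definition mate :: "('v \<times> 'f) set \<Rightarrow> 'v \<Rightarrow> 'f" where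
  "mate M v = (THE f. (v, f) \<in> M)"

locale perfectly_matched =
  fixes V :: "'v set" and F :: "'f set" and E M :: "('v \<times> 'f) set"
  assumes bipartite: "bipartite_graph V F E"
    and matching: "perfect_matching V F E M"
begin

lemma finite_V: "finite V"
  using bipartite by (simp add: bipartite_graph_def)

lemma E_subset: "E \<subseteq> V \<times> F"
  using bipartite by (simp add: bipartite_graph_def)

lemma M_subset: "M \<subseteq> E"
  using matching by (simp add: perfect_matching_def)

lemma unique_mate_of_V: "v \<in> V \<Longrightarrow> \<exists>!f. (v, f) \<in> M"
  using matching by (simp add: perfect_matching_def)

lemma unique_mate_of_F: "f \<in> F \<Longrightarrow> \<exists>!v. (v, f) \<in> M"
  using matching by (simp add: perfect_matching_def)

lemma mate_in_M: "v \<in> V \<Longrightarrow> (v, mate M v) \<in> M"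
  unfolding mate_def by (rule theI') (rule unique_mate_of_V)

lemma M_subset_V_F: "M \<subseteq> V \<times> F"
  using M_subset E_subset by (rule subset_trans)

lemma M_imp_mate: "(v, f) \<in> M \<Longrightarrow> v \<in> V \<and> f = mate M v"
  using M_subset_V_F mate_in_M unique_mate_of_V by blast

lemma mate_in_F: "v \<in> V \<Longrightarrow> mate M v \<in> F"
  using mate_in_M M_subset_V_F by blast

lemma inj_on_mate: "inj_on (mate M) V"
proof (rule inj_onI)
  fix v w assume "v \<in> V" "w \<in> V" "mate M v = mate M w"
  then have "(v, mate M v) \<in> M" "(w, mate M v) \<in> M" "mate M v \<in> F"
    using mate_in_M mate_in_F by metis+
  then show "v = w"
    using unique_mate_of_F by metis
qed

lemma in_M_iff_mate: "v \<in> V \<Longrightarrow> (v, f) \<in> M \<longleftrightarrow> f = mate M v"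
  using mate_in_M M_imp_mate by blast

lemma matched_eq_image_mate: "X \<subseteq> V \<Longrightarrow> matched M X = mate M ` X"
  unfolding matched_def image_def using in_M_iff_mate by blast

lemma F_eq_image_mate: "F = mate M ` V"
proof
  show "F \<subseteq> mate M ` V"
    using unique_mate_of_F M_imp_mate by (metis image_eqI subsetI)
  show "mate M ` V \<subseteq> F"
    using mate_in_F by blast
qed

lemma card_matched: "X \<subseteq> V \<Longrightarrow> card (matched M X) = card X"
  using matched_eq_image_mate inj_on_mate by (simp add: card_image inj_on_subset)

lemma adj_subset_V: "adj E X \<subseteq> V"
  using E_subset by (auto simp: adj_def)

lemma finite_adj: "finite (adj E X)"
  using adj_subset_V finite_V by (rule finite_subset)

lemma card_mate_preimage:
  assumes "X \<subseteq> F"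
  shows "card {v \<in> V. mate M v \<in> X} = card X"
proof -
  have "X = mate M ` {v \<in> V. mate M v \<in> X}"
    using assms F_eq_image_mate by blast
  moreover have "inj_on (mate M) {v \<in> V. mate M v \<in> X}"
    using inj_on_mate by (rule inj_on_subset) blast
  ultimately show ?thesis
    by (metis card_image)
qed

lemma mate_preimage_subset_adj: "{v \<in> V. mate M v \<in> X} \<subseteq> adj E X"
  unfolding adj_def using mate_in_M M_subset by blast

lemma card_le_card_adj: "X \<subseteq> F \<Longrightarrow> card X \<le> card (adj E X)"
  using card_mate_preimage mate_preimage_subset_adj finite_adj by (metis card_mono)

lemma self_contained_set_iff:
  "self_contained_set F E X \<longleftrightarrow> X \<subseteq> F \<and> card X = card (adj E X)"
  unfolding self_contained_set_def using card_le_card_adj by blast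

lemma adj_F: "adj E F = V"
  using E_subset mate_in_M mate_in_F M_subset unfolding adj_def by fastforce

theorem self_contained: "self_contained_graph V F E"
  unfolding self_contained_graph_def self_contained_set_iff
  using F_eq_image_mate inj_on_mate adj_F by (simp add: card_image)

lemma mar_graph_subset: "mar_graph E M \<subseteq> V \<times> V"
  using M_subset E_subset M_subset_V_F by (auto simp: mar_graph_iff)

lemma adj_self_contained_set:
  assumes "self_contained_set F E X"
  shows "adj E X = {v \<in> V. mate M v \<in> X}"
proof -
  have "X \<subseteq> F" "card X = card (adj E X)"
    using assms self_contained_set_iff by blast+
  then have "card {v \<in> V. mate M v \<in> X} = card (adj E X)"
    using card_mate_preimage by simp
  then show ?thesis
    using mate_preimage_subset_adj finite_adj by (metis card_subset_eq)
qed

lemma self_contained_set_closed_under_predecessors: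
  assumes "self_contained_set F E X" and "(x, y) \<in> (mar_graph E M)\<^sup>*"
    and "y \<in> V" and "mate M y \<in> X"
  shows "mate M x \<in> X"
  using assms(2-4)
proof (induction rule: converse_rtrancl_induct)
  case base
  then show ?case by blast
next
  case (step x z)
  then obtain f where "(x, f) \<in> E" "(z, f) \<in> M"
    using M_subset by (auto simp: mar_graph_iff)
  moreover have "x \<in> V" "z \<in> V"
    using step.hyps(1) mar_graph_subset by blast+
  ultimately have "x \<in> adj E X"
    using step in_M_iff_mate by (auto simp: adj_def)
  then show ?case
    using adj_self_contained_set[OF assms(1)] by blast
qed

lemma adj_matched_source:
  assumes "C \<subseteq> V"
    and source: "\<And>x y. (x, y) \<in> mar_graph E M \<Longrightarrow> y \<in> C \<Longrightarrow> x \<in> C"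
  shows "adj E (matched M C) = C"
proof
  show "C \<subseteq> adj E (matched M C)"
    unfolding adj_def matched_def using assms(1) mate_in_M M_subset by blast
  show "adj E (matched M C) \<subseteq> C"
  proof
    fix x assume "x \<in> adj E (matched M C)"
    then obtain y where "y \<in> C" "(x, mate M y) \<in> E"
      unfolding adj_def matched_eq_image_mate[OF assms(1)] by blast
    show "x \<in> C"
    proof (cases "(x, mate M y) \<in> M")
      case True
      moreover have "y \<in> V"
        using \<open>y \<in> C\<close> assms(1) by blast
      ultimately have "x = y"
        using unique_mate_of_F mate_in_M mate_in_F by blast
      then show ?thesis
        using \<open>y \<in> C\<close> by blast
    next
      case False
      then have "(x, y) \<in> mar_graph E M"
        using \<open>y \<in> C\<close> \<open>(x, mate M y) \<in> E\<close> assms(1) mate_in_M M_subset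
        by (auto simp: mar_graph_iff)
      then show ?thesis
        using source \<open>y \<in> C\<close> by blast
    qed
  qed
qed

theorem minimal_self_contained_matched_source_component:
  assumes "C \<subseteq> V" "C \<noteq> {}"
    and strongly_connected: "\<And>x y. x \<in> C \<Longrightarrow> y \<in> C \<Longrightarrow> (x, y) \<in> (mar_graph E M)\<^sup>*"
    and source: "\<And>x y. (x, y) \<in> mar_graph E M \<Longrightarrow> y \<in> C \<Longrightarrow> x \<in> C"
  shows "minimal_self_contained F E (matched M C)"
proof -
  have matched_C: "matched M C = mate M ` C"
    using assms(1) by (rule matched_eq_image_mate)
  have "matched M C \<subseteq> F"
    unfolding matched_C using assms(1) mate_in_F by blast
  then have "self_contained_set F E (matched M C)"
    using adj_matched_source[OF assms(1) source] card_matched[OF assms(1)] self_contained_set_iff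
    by simp
  moreover have "\<not> self_contained_set F E X" if "X \<noteq> {}" and X_sub: "X \<subset> matched M C" for X
  proof
    assume X: "self_contained_set F E X"
    obtain y where "y \<in> C" "mate M y \<in> X"
      using \<open>X \<noteq> {}\<close> X_sub unfolding matched_C by blast
    then have "mate M x \<in> X" if "x \<in> C" for x
      using self_contained_set_closed_under_predecessors[OF X] strongly_connected that assms(1)
      by blast
    then show False
      using X_sub unfolding matched_C by blast
  qed
  ultimately show ?thesis
    unfolding minimal_self_contained_def using assms(2) matched_C by auto
qed

lemma perfectly_matched_induced:
  assumes "W \<subseteq> V"
  shows "perfectly_matched W (matched M W) (E \<inter> W \<times> matched M W) (M \<inter> W \<times> matched M W)"
proof
  have matched_W: "matched M W = mate M ` W"
    using assms by (rule matched_eq_image_mate)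
  have "finite W"
    using assms finite_V by (rule finite_subset)
  then show "bipartite_graph W (matched M W) (E \<inter> W \<times> matched M W)"
    by (simp add: bipartite_graph_def matched_W)
  show "perfect_matching W (matched M W) (E \<inter> W \<times> matched M W) (M \<inter> W \<times> matched M W)"
    unfolding perfect_matching_def
  proof (intro conjI ballI)
    show "M \<inter> W \<times> matched M W \<subseteq> E \<inter> W \<times> matched M W"
      using M_subset by blast
  next
    fix v assume "v \<in> W"
    then have "(v, f) \<in> M \<inter> W \<times> matched M W \<longleftrightarrow> f = mate M v" for f
      using assms in_M_iff_mate unfolding matched_W by blast
    then show "\<exists>!f. (v, f) \<in> M \<inter> W \<times> matched M W"
      by simp
  next
    fix f assume "f \<in> matched M W"
    then obtain w where "w \<in> W" "f = mate M w"
      unfolding matched_W by blast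
    have "v = w" if "(v, f) \<in> M \<inter> W \<times> matched M W" for v
    proof -
      have "v \<in> V" "mate M v = mate M w"
        using that M_imp_mate \<open>f = mate M w\<close> by auto
      then show "v = w"
        using \<open>w \<in> W\<close> assms inj_on_mate by (auto dest: inj_onD)
    qed
    moreover have "(w, f) \<in> M \<inter> W \<times> matched M W"
      using \<open>w \<in> W\<close> \<open>f \<in> matched M W\<close> \<open>f = mate M w\<close> assms mate_in_M by blast
    ultimately show "\<exists>!v. (v, f) \<in> M \<inter> W \<times> matched M W"
      by blast
  qed
qed

end

lemma sccs_subset: "C \<in> sccs V R \<Longrightarrow> C \<subseteq> V"
  by (auto simp: sccs_def)

lemma sccs_nonempty: "C \<in> sccs V R \<Longrightarrow> C \<noteq> {}"
  by (auto simp: sccs_def)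

lemma sccs_rtrancl_Restr:
  assumes "C \<in> sccs V R" and "x \<in> C" and "y \<in> C"
  shows "(x, y) \<in> (Restr R C)\<^sup>*"
proof -
  obtain x0 where C: "C = {z \<in> V. (x0, z) \<in> (Restr R V)\<^sup>* \<and> (z, x0) \<in> (Restr R V)\<^sup>*}"
    using assms(1) by (auto simp: sccs_def)
  have x0_x: "(x0, x) \<in> (Restr R V)\<^sup>*"
    using assms(2) C by blast
  have "(x, z) \<in> (Restr R C)\<^sup>*"
    if "(x, z) \<in> (Restr R V)\<^sup>*" and "(z, x0) \<in> (Restr R V)\<^sup>*" for z
    using that
  proof (induction rule: rtrancl_induct)
    case base
    then show ?case by simp
  next
    case (step w z)
    have "(x0, w) \<in> (Restr R V)\<^sup>*"
      using x0_x step.hyps(1) by (rule rtrancl_trans)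
    moreover have "(w, x0) \<in> (Restr R V)\<^sup>*"
      using step.hyps(2) step.prems by (rule converse_rtrancl_into_rtrancl)
    moreover have "(x0, z) \<in> (Restr R V)\<^sup>*"
      using \<open>(x0, w) \<in> (Restr R V)\<^sup>*\<close> step.hyps(2) by (rule rtrancl_into_rtrancl)
    ultimately have "w \<in> C" "z \<in> C"
      using C step.hyps(2) step.prems by blast+
    then have "(w, z) \<in> Restr R C"
      using step.hyps(2) by blast
    with step.IH \<open>(w, x0) \<in> (Restr R V)\<^sup>*\<close> show ?case
      by (meson rtrancl_into_rtrancl)
  qed
  moreover have "(x, y) \<in> (Restr R V)\<^sup>*" "(y, x0) \<in> (Restr R V)\<^sup>*"
    using assms(2,3) C by (blast intro: rtrancl_trans)+
  ultimately show ?thesis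
    by blast
qed

lemma topological_scc_ordering_suffix:
  assumes S: "topological_scc_ordering V R S" and "i < length S"
  defines "W \<equiv> \<Union>j\<in>{i..<length S}. S ! j"
  shows "W \<subseteq> V" and "S ! i \<noteq> {}" and "S ! i \<subseteq> W"
    and "\<And>x y. x \<in> S ! i \<Longrightarrow> y \<in> S ! i \<Longrightarrow> (x, y) \<in> (Restr R W)\<^sup>*"
    and "\<And>x y. (x, y) \<in> Restr R W \<Longrightarrow> y \<in> S ! i \<Longrightarrow> x \<in> S ! i"
proof -
  have scc: "S ! j \<in> sccs V R" if "j < length S" for j
    using S that unfolding topological_scc_ordering_def by (metis nth_mem)
  show "W \<subseteq> V"
    unfolding W_def using scc sccs_subset by fastforce
  show "S ! i \<noteq> {}"
    using scc assms(2) sccs_nonempty by blast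
  show "S ! i \<subseteq> W"
    unfolding W_def using assms(2) by auto
  then have "Restr R (S ! i) \<subseteq> Restr R W"
    by blast
  then show "(x, y) \<in> (Restr R W)\<^sup>*" if "x \<in> S ! i" "y \<in> S ! i" for x y
    using sccs_rtrancl_Restr[OF scc[OF assms(2)] that] by (meson rtrancl_mono subsetD)
  show "x \<in> S ! i" if edge: "(x, y) \<in> Restr R W" and "y \<in> S ! i" for x y
  proof -
    obtain j where "i \<le> j" "j < length S" "x \<in> S ! j"
      using edge unfolding W_def by auto
    moreover have "\<not> j < i"
      using \<open>i \<le> j\<close> by simp
    ultimately have "j = i"
      using S edge \<open>y \<in> S ! i\<close> assms(2) unfolding topological_scc_ordering_def by blast
    then show ?thesis
      using \<open>x \<in> S ! j\<close> by simp
  qed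
qed

theorem lemma40:
  fixes V :: "'v set" and F :: "'f set" and E M :: "('v \<times> 'f) set"
    and S :: "'v set list" and i :: nat
  assumes "bipartite_graph V F E"
    and "self_contained_graph V F E"
    and "perfect_matching V F E M"
    and "topological_scc_ordering V (mar_graph E M) S"
    and "i < length S"
  shows "let Vi = (\<Union>j\<in>{i..<length S}. S ! j);
             Fi = (\<Union>j\<in>{i..<length S}. matched M (S ! j));
             Ei = E \<inter> (Vi \<times> Fi)
         in self_contained_graph Vi Fi Ei \<and> minimal_self_contained Fi Ei (matched M (S ! i))"
proof -
  interpret perfectly_matched V F E M
    using assms(1,3) by unfold_locales
  define Vi where "Vi = (\<Union>j\<in>{i..<length S}. S ! j)"
  note suffix = topological_scc_ordering_suffix[OF assms(4,5), folded Vi_def]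
  interpret induced: perfectly_matched Vi "matched M Vi" "E \<inter> Vi \<times> matched M Vi"
      "M \<inter> Vi \<times> matched M Vi"
    using suffix(1) by (rule perfectly_matched_induced)
  have "minimal_self_contained (matched M Vi) (E \<inter> Vi \<times> matched M Vi) (matched M (S ! i))"
    using induced.minimal_self_contained_matched_source_component[OF suffix(3,2)] suffix(4,5)
    unfolding mar_graph_induced[OF M_subset] matched_induced[OF suffix(3)] by blast
  moreover have "(\<Union>j\<in>{i..<length S}. matched M (S ! j)) = matched M Vi"
    unfolding Vi_def matched_def by blast
  ultimately show ?thesis
    using induced.self_contained unfolding Vi_def Let_def by simp
qed

end
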